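(* Assume $\mathbf a,\mathbf b\in\Delta^n$ with strictly positive entries, let $\kappa=1/\min\{a_{min},b_{min}\}$ and $M=\log(2)\|C\|_\infty^2(n+3\kappa)^2+2n\|C\|_\infty^2$. Then $$0\le\mathrm{OT}(\mathbf a,\mathbf b)-\mathbf{UOT}_{\mathbf{KL}}(\mathbf a,\mathbf b)\le\frac{M}{\tau},$$ where $\mathrm{OT}(\mathbf a,\mathbf b)=\min_{X\in\Pi(\mathbf a,\mathbf b)}\langle C,X\rangle$ and $\mathbf{UOT}_{\mathbf{KL}}(\mathbf a,\mathbf b)=\min_{X\in\mathbb{R}^{n\times n}_+}\big\{\langle C,X\rangle+\tau\mathbf{KL}(X\mathbf 1_n\|\mathbf a)+\tau\mathbf{KL}(X^\top\mathbf 1_n\|\mathbf b)\big\}$.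
   Context: Let $n\ge1$, $C\in\mathbb{R}^{n\times n}$ with nonnegative entries and $\|C\|_\infty=\max_{i,j}|C_{ij}|$; $\tau>0$; $\Delta^n=\{\mathbf x\in\mathbb{R}^n_+:\sum_i x_i=1\}$; $a_{min}=\min_i a_i$, $b_{min}=\min_i b_i$; $\Pi(\mathbf a,\mathbf b)=\{X\in\mathbb{R}^{n\times n}_+:X\mathbf 1_n=\mathbf a,\ X^\top\mathbf 1_n=\mathbf b\}$. For $\mathbf x\in\mathbb{R}^n_+$ and $\mathbf y$ with positive entries, $\mathbf{KL}(\mathbf x\|\mathbf y)=\sum_i x_i\log(x_i/y_i)-x_i+y_i$ (with $0\log0=0$). $\mathbf 1_n$ is the all-ones vector. *)

theory Defs
  imports Complex_Main
begin

text \<open>Vectors in R^n are functions 'n => real, n x n matrices are 'n => 'n => real,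
  for a finite index type 'n with n = CARD('n).\<close>

definition simplex :: "('n::finite \<Rightarrow> real) set" where
  "simplex = {x. (\<forall>i. x i \<ge> 0) \<and> (\<Sum>i\<in>UNIV. x i) = 1}"

definition inf_norm :: "('n::finite \<Rightarrow> 'n \<Rightarrow> real) \<Rightarrow> real" where
  "inf_norm C = Max {\<bar>C i j\<bar> | i j. True}"

definition frob :: "('n::finite \<Rightarrow> 'n \<Rightarrow> real) \<Rightarrow> ('n \<Rightarrow> 'n \<Rightarrow> real) \<Rightarrow> real" where
  "frob C X = (\<Sum>i\<in>UNIV. \<Sum>j\<in>UNIV. C i j * X i j)"

definition row_sums :: "('n::finite \<Rightarrow> 'n \<Rightarrow> real) \<Rightarrow> 'n \<Rightarrow> real" where
  "row_sums X = (\<lambda>i. \<Sum>j\<in>UNIV. X i j)"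

definition col_sums :: "('n::finite \<Rightarrow> 'n \<Rightarrow> real) \<Rightarrow> 'n \<Rightarrow> real" where
  "col_sums X = (\<lambda>j. \<Sum>i\<in>UNIV. X i j)"

definition nonneg_mats :: "('n::finite \<Rightarrow> 'n \<Rightarrow> real) set" where
  "nonneg_mats = {X. \<forall>i j. X i j \<ge> 0}"

definition transport_polytope :: "('n::finite \<Rightarrow> real) \<Rightarrow> ('n \<Rightarrow> real) \<Rightarrow> ('n \<Rightarrow> 'n \<Rightarrow> real) set" where
  "transport_polytope a b = {X \<in> nonneg_mats. row_sums X = a \<and> col_sums X = b}"

definition KL :: "('n::finite \<Rightarrow> real) \<Rightarrow> ('n \<Rightarrow> real) \<Rightarrow> real" where
  "KL x y = (\<Sum>i\<in>UNIV. (if x i = 0 then 0 else x i * ln (x i / y i)) - x i + y i)"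

definition OT :: "('n::finite \<Rightarrow> 'n \<Rightarrow> real) \<Rightarrow> ('n \<Rightarrow> real) \<Rightarrow> ('n \<Rightarrow> real) \<Rightarrow> real" where
  "OT C a b = Inf (frob C ` transport_polytope a b)"

definition UOT_KL :: "('n::finite \<Rightarrow> 'n \<Rightarrow> real) \<Rightarrow> real \<Rightarrow> ('n \<Rightarrow> real) \<Rightarrow> ('n \<Rightarrow> real) \<Rightarrow> real" where
  "UOT_KL C \<tau> a b = Inf ((\<lambda>X. frob C X + \<tau> * KL (row_sums X) a + \<tau> * KL (col_sums X) b) ` nonneg_mats)"

end

theory Submission
  imports Defs
begin

text \<open>Every transport plan has zero KL penalty, so \<open>UOT \<le> OT\<close>. Conversely, for \<open>0 \<le> u \<le> 1\<close> and
  a probability vector \<open>y\<close> one has \<open>KL(x\<parallel>y) \<ge> u \<parallel>x - y\<parallel>\<^sub>1 - u\<^sup>2\<close>; with \<open>u = \<parallel>C\<parallel>\<^sub>\<infinity>/\<tau>\<close> the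
  penalty of a nonnegative \<open>X\<close> is at least \<open>\<parallel>C\<parallel>\<^sub>\<infinity>\<close> times the \<open>\<ell>\<^sub>1\<close> violation of its marginals,
  minus \<open>2\<parallel>C\<parallel>\<^sub>\<infinity>\<^sup>2/\<tau>\<close>. Rounding \<open>X\<close> onto \<open>\<Pi>(a,b)\<close> (scale down rows, then columns, then add a
  rank-one correction) raises the cost by at most that violation times \<open>\<parallel>C\<parallel>\<^sub>\<infinity>\<close>. Hence
  \<open>OT - UOT \<le> 2\<parallel>C\<parallel>\<^sub>\<infinity>\<^sup>2/\<tau> \<le> M/\<tau>\<close>; when \<open>\<tau> \<le> \<parallel>C\<parallel>\<^sub>\<infinity>\<close> this already follows from \<open>0 \<le> UOT\<close> and
  \<open>OT \<le> \<parallel>C\<parallel>\<^sub>\<infinity>\<close>.\<close>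

lemma abs_le_inf_norm: "\<bar>C i j\<bar> \<le> inf_norm (C :: 'n::finite \<Rightarrow> 'n \<Rightarrow> real)"
  unfolding inf_norm_def
proof (rule Max_ge)
  have "{\<bar>C i j\<bar> | i j. True} = (\<lambda>(i, j). \<bar>C i j\<bar>) ` UNIV" by auto
  then show "finite {\<bar>C i j\<bar> | i j. True}" by simp
qed auto

lemma exp_minus_one_minus_le_square:
  fixes v :: real
  assumes "\<bar>v\<bar> \<le> 1"
  shows "exp v - 1 - v \<le> v\<^sup>2"
proof (cases "v \<ge> 0")
  case True
  then show ?thesis using exp_bound[of v] assms by simp
next
  case False
  have "exp v = 1 / exp (- v)" by (simp add: exp_minus field_simps)
  also have "\<dots> \<le> 1 / (1 - v)"
    using exp_ge_add_one_self[of "- v"] False by (intro divide_left_mono) auto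
  also have "\<dots> \<le> 1 + v + v\<^sup>2"
  proof -
    have "(1 - v) * (1 + v + v\<^sup>2) = 1 - v * v\<^sup>2" by (simp add: algebra_simps power2_eq_square)
    moreover have "v * v\<^sup>2 \<le> 0" using False by (intro mult_nonpos_nonneg) auto
    ultimately show ?thesis using False by (simp add: divide_simps mult.commute)
  qed
  finally show ?thesis by simp
qed

text \<open>Fenchel--Young inequality for the convex conjugate \<open>v \<mapsto> y (e\<^sup>v - 1)\<close> of a KL summand.\<close>

lemma KL_summand_ge:
  fixes x y v :: real
  assumes "x \<ge> 0" and "y > 0"
  shows "(if x = 0 then 0 else x * ln (x / y)) - x + y \<ge> v * (x - y) - y * (exp v - 1 - v)"
proof (cases "x = 0")
  case True
  then show ?thesis using assms by (simp add: algebra_simps)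
next
  case False
  with assms have "x > 0" by simp
  have "1 + (v - ln (x / y)) \<le> exp (v - ln (x / y))" by (rule exp_ge_add_one_self)
  also have "\<dots> = exp v * y / x" using \<open>x > 0\<close> \<open>y > 0\<close> by (simp add: exp_diff)
  finally have "x * (1 + v - ln (x / y)) \<le> y * exp v"
    using \<open>x > 0\<close> by (simp add: field_simps)
  then show ?thesis using False by (simp add: algebra_simps)
qed

lemma KL_nonneg:
  assumes "\<forall>i. x i \<ge> 0" and "\<forall>i. y i > 0"
  shows "KL x y \<ge> 0"
  unfolding KL_def using KL_summand_ge[of "x _" "y _" 0] assms by (intro sum_nonneg) simp

lemma KL_self: "\<forall>i. x i > 0 \<Longrightarrow> KL x x = 0"
  unfolding KL_def by (simp add: less_imp_neq[symmetric])

lemma KL_ge_l1_linear: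
  fixes x y :: "'n::finite \<Rightarrow> real"
  assumes x: "\<forall>i. x i \<ge> 0" and y: "\<forall>i. y i > 0" and y_sum: "(\<Sum>i\<in>UNIV. y i) = 1"
    and u: "0 \<le> u" "u \<le> 1"
  shows "KL x y \<ge> u * (\<Sum>i\<in>UNIV. \<bar>x i - y i\<bar>) - u\<^sup>2"
proof -
  have summand: "u * \<bar>x i - y i\<bar> - y i * u\<^sup>2
      \<le> (if x i = 0 then 0 else x i * ln (x i / y i)) - x i + y i" for i
  proof -
    define v where "v = (if x i \<ge> y i then u else - u)"
    have "exp v - 1 - v \<le> u\<^sup>2"
      using exp_minus_one_minus_le_square[of u] exp_minus_one_minus_le_square[of "- u"] u
      by (simp add: v_def)
    then have "y i * (exp v - 1 - v) \<le> y i * u\<^sup>2"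
      using y by (intro mult_left_mono) (auto simp: less_imp_le)
    moreover have "v * (x i - y i) = u * \<bar>x i - y i\<bar>" by (simp add: v_def algebra_simps)
    ultimately show ?thesis using KL_summand_ge[of "x i" "y i" v] x y by fastforce
  qed
  have "(\<Sum>i\<in>UNIV. u * \<bar>x i - y i\<bar> - y i * u\<^sup>2)
        = u * (\<Sum>i\<in>UNIV. \<bar>x i - y i\<bar>) - (\<Sum>i\<in>UNIV. y i) * u\<^sup>2"
    by (simp only: sum_subtractf sum_distrib_left sum_distrib_right)
  then have "u * (\<Sum>i\<in>UNIV. \<bar>x i - y i\<bar>) - u\<^sup>2 = (\<Sum>i\<in>UNIV. u * \<bar>x i - y i\<bar> - y i * u\<^sup>2)"
    using y_sum by simp
  also have "\<dots> \<le> KL x y" unfolding KL_def by (rule sum_mono) (rule summand)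
  finally show ?thesis .
qed

lemma frob_nonneg: "\<forall>i j. C i j \<ge> 0 \<Longrightarrow> X \<in> nonneg_mats \<Longrightarrow> frob C X \<ge> 0"
  unfolding frob_def nonneg_mats_def by (intro sum_nonneg mult_nonneg_nonneg) auto

lemma frob_mono:
  fixes C :: "'n::finite \<Rightarrow> 'n \<Rightarrow> real"
  assumes "\<forall>i j. C i j \<ge> 0" and "\<forall>i j. X i j \<le> Y i j"
  shows "frob C X \<le> frob C Y"
  unfolding frob_def using assms by (intro sum_mono mult_left_mono) auto

lemma row_sums_nonneg: "X \<in> nonneg_mats \<Longrightarrow> row_sums X i \<ge> 0"
  unfolding nonneg_mats_def row_sums_def by (auto intro: sum_nonneg)

lemma col_sums_nonneg: "X \<in> nonneg_mats \<Longrightarrow> col_sums X j \<ge> 0"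
  unfolding nonneg_mats_def col_sums_def by (auto intro: sum_nonneg)

lemma sum_row_sums_eq_sum_col_sums:
  "(\<Sum>i\<in>UNIV. row_sums X i) = (\<Sum>j\<in>UNIV. col_sums (X :: 'n::finite \<Rightarrow> 'n \<Rightarrow> real) j)"
  unfolding row_sums_def col_sums_def by (rule sum.swap)

lemma scale_rows_to_min:
  fixes X :: "'n::finite \<Rightarrow> 'n \<Rightarrow> real"
  assumes X: "X \<in> nonneg_mats" and a: "\<forall>i. a i \<ge> 0"
  obtains X' where "\<forall>i j. 0 \<le> X' i j \<and> X' i j \<le> X i j"
    and "\<forall>i. row_sums X' i = min (row_sums X i) (a i)"
proof
  define \<alpha> where "\<alpha> i = (if row_sums X i \<le> a i then 1 else a i / row_sums X i)" for i
  have \<alpha>: "0 \<le> \<alpha> i \<and> \<alpha> i \<le> 1" for i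
    using a row_sums_nonneg[OF X, of i] by (auto simp: \<alpha>_def divide_simps)
  show "\<forall>i j. 0 \<le> \<alpha> i * X i j \<and> \<alpha> i * X i j \<le> X i j"
    using \<alpha> X by (auto simp: nonneg_mats_def mult_left_le_one_le)
  show "\<forall>i. row_sums (\<lambda>i j. \<alpha> i * X i j) i = min (row_sums X i) (a i)"
    using a row_sums_nonneg[OF X]
    by (auto simp: \<alpha>_def row_sums_def simp flip: sum_distrib_left)
qed

lemma truncate_to_marginals:
  fixes X :: "'n::finite \<Rightarrow> 'n \<Rightarrow> real"
  assumes X: "X \<in> nonneg_mats" and a: "\<forall>i. a i \<ge> 0" and b: "\<forall>j. b j \<ge> 0"
  obtains X' where "\<forall>i j. 0 \<le> X' i j \<and> X' i j \<le> X i j"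
    and "\<forall>i. row_sums X' i \<le> a i" and "\<forall>j. col_sums X' j \<le> b j"
    and "(\<Sum>i\<in>UNIV. a i) - (\<Sum>i\<in>UNIV. row_sums X' i)
           \<le> (\<Sum>i\<in>UNIV. \<bar>row_sums X i - a i\<bar>) + (\<Sum>j\<in>UNIV. \<bar>col_sums X j - b j\<bar>)"
proof -
  obtain X1 where X1: "\<forall>i j. 0 \<le> X1 i j \<and> X1 i j \<le> X i j"
    and r1: "\<forall>i. row_sums X1 i = min (row_sums X i) (a i)"
    by (rule scale_rows_to_min[OF X a])
  have "(\<lambda>i j. X1 j i) \<in> nonneg_mats" using X1 by (simp add: nonneg_mats_def)
  from scale_rows_to_min[OF this b] obtain X2t where X2t: "\<forall>i j. 0 \<le> X2t i j \<and> X2t i j \<le> X1 j i"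
    and "\<forall>j. row_sums X2t j = min (row_sums (\<lambda>i j. X1 j i) j) (b j)" .
  define X2 where "X2 i j = X2t j i" for i j
  have c2: "\<forall>j. col_sums X2 j = min (col_sums X1 j) (b j)"
    using \<open>\<forall>j. row_sums X2t j = _\<close> by (simp add: X2_def row_sums_def col_sums_def)
  have "0 \<le> X2 i j \<and> X2 i j \<le> X i j" for i j
    using X2t[rule_format, of j i] X1[rule_format, of i j] by (simp add: X2_def)
  then have X2: "\<forall>i j. 0 \<le> X2 i j \<and> X2 i j \<le> X i j" by blast
  have r2: "row_sums X2 i \<le> a i" for i
  proof -
    have "row_sums X2 i \<le> row_sums X1 i"
      unfolding row_sums_def X2_def using X2t by (intro sum_mono) auto
    then show ?thesis using r1 by simp
  qed
  have c1_le: "col_sums X1 j \<le> col_sums X j" for j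
    unfolding col_sums_def using X1 by (intro sum_mono) auto
  have "(\<Sum>i\<in>UNIV. a i) - (\<Sum>i\<in>UNIV. \<bar>row_sums X i - a i\<bar>)
        = (\<Sum>i\<in>UNIV. a i - \<bar>row_sums X i - a i\<bar>)"
    by (simp add: sum_subtractf)
  also have "\<dots> \<le> (\<Sum>i\<in>UNIV. min (row_sums X i) (a i))"
    by (intro sum_mono) arith
  also have "\<dots> = (\<Sum>j\<in>UNIV. col_sums X1 j)"
    using r1 sum_row_sums_eq_sum_col_sums[of X1] by simp
  finally have mass1: "(\<Sum>i\<in>UNIV. a i) - (\<Sum>i\<in>UNIV. \<bar>row_sums X i - a i\<bar>)
      \<le> (\<Sum>j\<in>UNIV. col_sums X1 j)" .
  have "(\<Sum>j\<in>UNIV. col_sums X1 j) - (\<Sum>j\<in>UNIV. \<bar>col_sums X j - b j\<bar>)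
        = (\<Sum>j\<in>UNIV. col_sums X1 j - \<bar>col_sums X j - b j\<bar>)"
    by (simp add: sum_subtractf)
  also have "\<dots> \<le> (\<Sum>j\<in>UNIV. min (col_sums X1 j) (b j))"
    using c1_le by (intro sum_mono) (smt (verit))
  also have "\<dots> = (\<Sum>i\<in>UNIV. row_sums X2 i)"
    using c2 sum_row_sums_eq_sum_col_sums[of X2] by simp
  finally have mass2: "(\<Sum>j\<in>UNIV. col_sums X1 j) - (\<Sum>j\<in>UNIV. \<bar>col_sums X j - b j\<bar>)
      \<le> (\<Sum>i\<in>UNIV. row_sums X2 i)" .
  have "\<forall>j. col_sums X2 j \<le> b j" using c2 by simp
  with X2 r2 mass1 mass2 show ?thesis by (intro that) auto
qed

text \<open>The deficits \<open>p = a - X 1\<close> and \<open>q = b - X\<^sup>T 1\<close> have the same total \<open>s\<close>, so adding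
  \<open>p q\<^sup>T / s\<close> fixes both marginals at once.\<close>

lemma complete_to_transport_plan:
  fixes X C :: "'n::finite \<Rightarrow> 'n \<Rightarrow> real"
  assumes X: "X \<in> nonneg_mats"
    and r: "\<forall>i. row_sums X i \<le> a i" and c: "\<forall>j. col_sums X j \<le> b j"
    and ab: "(\<Sum>i\<in>UNIV. a i) = (\<Sum>j\<in>UNIV. b j)" and C: "\<forall>i j. C i j \<le> D"
  obtains Y where "Y \<in> transport_polytope a b"
    and "frob C Y \<le> frob C X + D * ((\<Sum>i\<in>UNIV. a i) - (\<Sum>i\<in>UNIV. row_sums X i))"
proof -
  define p where "p i = a i - row_sums X i" for i
  define q where "q j = b j - col_sums X j" for j
  define s where "s = (\<Sum>i\<in>UNIV. p i)"
  \<comment> \<open>If \<open>s = 0\<close> then \<open>p = q = 0\<close>, so the junk value of division by zero is harmless.\<close>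
  define Y where "Y i j = X i j + p i * q j / s" for i j
  have p0: "p i \<ge> 0" for i using r by (simp add: p_def)
  have q0: "q j \<ge> 0" for j using c by (simp add: q_def)
  have q_sum: "(\<Sum>j\<in>UNIV. q j) = s"
    using ab sum_row_sums_eq_sum_col_sums[of X] by (simp add: s_def p_def q_def sum_subtractf)
  have p_cancel: "p i * s / s = p i" for i
    using p0 by (cases "s = 0") (auto simp: s_def sum_nonneg_eq_0_iff)
  have q_cancel: "q j * s / s = q j" for j
    using q0 q_sum by (cases "s = 0") (auto simp: sum_nonneg_eq_0_iff)
  have s0: "s \<ge> 0" unfolding s_def using p0 by (simp add: sum_nonneg)
  have Y: "Y \<in> transport_polytope a b"
  proof -
    have "Y \<in> nonneg_mats"
      using X p0 q0 s0 by (simp add: nonneg_mats_def Y_def)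
    moreover have "row_sums Y i = a i" for i
    proof -
      have "row_sums Y i = row_sums X i + p i * (\<Sum>j\<in>UNIV. q j) / s"
        by (simp add: row_sums_def Y_def sum.distrib sum_distrib_left sum_divide_distrib)
      then show ?thesis using p_cancel[of i] q_sum by (simp add: p_def)
    qed
    moreover have "col_sums Y j = b j" for j
    proof -
      have "col_sums Y j = col_sums X j + (\<Sum>i\<in>UNIV. p i) * q j / s"
        by (simp add: col_sums_def Y_def sum.distrib sum_distrib_right sum_divide_distrib)
      then show ?thesis using q_cancel[of j] by (simp add: q_def mult.commute flip: s_def)
    qed
    ultimately show ?thesis by (auto simp: transport_polytope_def)
  qed
  have "frob C Y \<le> frob C X + D * s"
  proof -
    have "frob C Y = frob C X + (\<Sum>i\<in>UNIV. \<Sum>j\<in>UNIV. C i j * (p i * q j / s))"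
      by (simp add: frob_def Y_def distrib_left sum.distrib)
    also have "(\<Sum>i\<in>UNIV. \<Sum>j\<in>UNIV. C i j * (p i * q j / s))
               \<le> (\<Sum>i\<in>UNIV. \<Sum>j\<in>UNIV. D * (p i * q j / s))"
      using C p0 q0 s0 by (intro sum_mono mult_right_mono) auto
    also have "\<dots> = D / s * ((\<Sum>i\<in>UNIV. p i) * (\<Sum>j\<in>UNIV. q j))"
      unfolding sum_product by (simp add: sum_distrib_left)
    also have "\<dots> = D * s"
      using q_sum by (simp add: power2_eq_square flip: s_def)
    finally show ?thesis by simp
  qed
  moreover have "s = (\<Sum>i\<in>UNIV. a i) - (\<Sum>i\<in>UNIV. row_sums X i)"
    by (simp add: s_def p_def sum_subtractf)
  ultimately show ?thesis by (intro that[OF Y]) simp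
qed

lemma round_to_transport_plan:
  fixes X C :: "'n::finite \<Rightarrow> 'n \<Rightarrow> real"
  assumes X: "X \<in> nonneg_mats" and C: "\<forall>i j. 0 \<le> C i j \<and> C i j \<le> D"
    and a: "\<forall>i. a i \<ge> 0" and b: "\<forall>j. b j \<ge> 0" and ab: "(\<Sum>i\<in>UNIV. a i) = (\<Sum>j\<in>UNIV. b j)"
  obtains Y where "Y \<in> transport_polytope a b"
    and "frob C Y \<le> frob C X
           + D * ((\<Sum>i\<in>UNIV. \<bar>row_sums X i - a i\<bar>) + (\<Sum>j\<in>UNIV. \<bar>col_sums X j - b j\<bar>))"
proof -
  obtain X' where X': "\<forall>i j. 0 \<le> X' i j \<and> X' i j \<le> X i j"
    and rows: "\<forall>i. row_sums X' i \<le> a i" and cols: "\<forall>j. col_sums X' j \<le> b j"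
    and deficit: "(\<Sum>i\<in>UNIV. a i) - (\<Sum>i\<in>UNIV. row_sums X' i)
           \<le> (\<Sum>i\<in>UNIV. \<bar>row_sums X i - a i\<bar>) + (\<Sum>j\<in>UNIV. \<bar>col_sums X j - b j\<bar>)"
    by (rule truncate_to_marginals[OF X a b])
  have "X' \<in> nonneg_mats" using X' by (simp add: nonneg_mats_def)
  moreover have "\<forall>i j. C i j \<le> D" using C by blast
  ultimately obtain Y where Y: "Y \<in> transport_polytope a b"
    and cost: "frob C Y \<le> frob C X' + D * ((\<Sum>i\<in>UNIV. a i) - (\<Sum>i\<in>UNIV. row_sums X' i))"
    using complete_to_transport_plan[OF _ rows cols ab] by blast
  have "frob C X' \<le> frob C X" using C X' by (intro frob_mono) auto
  moreover have "D \<ge> 0" using C by (meson order_trans)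
  with deficit have "D * ((\<Sum>i\<in>UNIV. a i) - (\<Sum>i\<in>UNIV. row_sums X' i))
      \<le> D * ((\<Sum>i\<in>UNIV. \<bar>row_sums X i - a i\<bar>) + (\<Sum>j\<in>UNIV. \<bar>col_sums X j - b j\<bar>))"
    by (rule mult_left_mono)
  ultimately show ?thesis using cost by (intro that[OF Y]) linarith
qed

definition uot_objective ::
    "('n::finite \<Rightarrow> 'n \<Rightarrow> real) \<Rightarrow> real \<Rightarrow> ('n \<Rightarrow> real) \<Rightarrow> ('n \<Rightarrow> real) \<Rightarrow> ('n \<Rightarrow> 'n \<Rightarrow> real) \<Rightarrow> real"
  where "uot_objective C \<tau> a b X = frob C X + \<tau> * KL (row_sums X) a + \<tau> * KL (col_sums X) b"

lemma UOT_KL_eq_Inf_uot_objective: "UOT_KL C \<tau> a b = Inf (uot_objective C \<tau> a b ` nonneg_mats)"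
  unfolding UOT_KL_def uot_objective_def ..

locale ot_setting =
  fixes C :: "'n::finite \<Rightarrow> 'n \<Rightarrow> real" and a b :: "'n \<Rightarrow> real" and \<tau> :: real
  assumes C_nonneg: "\<forall>i j. C i j \<ge> 0" and tau_pos: "\<tau> > 0"
    and a_simplex: "a \<in> simplex" and b_simplex: "b \<in> simplex"
    and a_pos: "\<forall>i. a i > 0" and b_pos: "\<forall>i. b i > 0"
begin

lemma sum_a: "(\<Sum>i\<in>UNIV. a i) = 1" and sum_b: "(\<Sum>j\<in>UNIV. b j) = 1"
  using a_simplex b_simplex by (auto simp: simplex_def)

lemma sum_a_eq_sum_b: "(\<Sum>i\<in>UNIV. a i) = (\<Sum>j\<in>UNIV. b j)"
  using sum_a sum_b by simp

lemma a_nonneg: "\<forall>i. a i \<ge> 0" and b_nonneg: "\<forall>j. b j \<ge> 0"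
  using a_pos b_pos by (auto simp: less_imp_le)

lemma C_le_inf_norm: "\<forall>i j. 0 \<le> C i j \<and> C i j \<le> inf_norm C"
  using C_nonneg abs_le_inf_norm[of C] by (metis abs_of_nonneg)

lemma uot_objective_nonneg:
  assumes "X \<in> nonneg_mats"
  shows "uot_objective C \<tau> a b X \<ge> 0"
proof -
  have "KL (row_sums X) a \<ge> 0" "KL (col_sums X) b \<ge> 0"
    using KL_nonneg a_pos b_pos row_sums_nonneg[OF assms] col_sums_nonneg[OF assms] by auto
  then show ?thesis
    using frob_nonneg[OF C_nonneg assms] tau_pos by (simp add: uot_objective_def)
qed

definition product_plan :: "'n \<Rightarrow> 'n \<Rightarrow> real" where
  "product_plan i j = a i * b j"

lemma product_plan_in_transport_polytope: "product_plan \<in> transport_polytope a b"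
  using a_pos b_pos sum_a sum_b
  by (auto simp: transport_polytope_def nonneg_mats_def row_sums_def col_sums_def product_plan_def
      less_imp_le simp flip: sum_distrib_left sum_distrib_right)

lemma OT_le_frob: "Y \<in> transport_polytope a b \<Longrightarrow> OT C a b \<le> frob C Y"
  unfolding OT_def
  by (rule cInf_lower) (auto intro!: bdd_belowI2[where m = 0] frob_nonneg[OF C_nonneg]
      simp: transport_polytope_def)

lemma OT_le_inf_norm: "OT C a b \<le> inf_norm C"
proof -
  have "frob C product_plan \<le> (\<Sum>i\<in>UNIV. \<Sum>j\<in>UNIV. inf_norm C * (a i * b j))"
    unfolding frob_def product_plan_def using C_le_inf_norm a_pos b_pos
    by (intro sum_mono mult_right_mono) (auto simp: less_imp_le)
  also have "\<dots> = inf_norm C"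
    using sum_a sum_b by (simp flip: sum_distrib_left sum_distrib_right)
  finally show ?thesis using OT_le_frob[OF product_plan_in_transport_polytope] by simp
qed

lemma UOT_KL_nonneg: "UOT_KL C \<tau> a b \<ge> 0"
  unfolding UOT_KL_eq_Inf_uot_objective
  using product_plan_in_transport_polytope uot_objective_nonneg
  by (intro cInf_greatest) (auto simp: transport_polytope_def)

lemma UOT_KL_le_OT: "UOT_KL C \<tau> a b \<le> OT C a b"
  unfolding OT_def
proof (rule cInf_greatest)
  show "frob C ` transport_polytope a b \<noteq> {}" using product_plan_in_transport_polytope by blast
next
  fix v assume "v \<in> frob C ` transport_polytope a b"
  then obtain X where X: "X \<in> transport_polytope a b" and v: "v = frob C X" by blast
  then have "uot_objective C \<tau> a b X = v"
    using KL_self[OF a_pos] KL_self[OF b_pos]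
    by (simp add: uot_objective_def transport_polytope_def)
  moreover have "X \<in> nonneg_mats" using X by (simp add: transport_polytope_def)
  ultimately show "UOT_KL C \<tau> a b \<le> v"
    unfolding UOT_KL_eq_Inf_uot_objective
    by (metis bdd_belowI2 cInf_lower image_eqI uot_objective_nonneg)
qed

lemma OT_le_uot_objective:
  assumes X: "X \<in> nonneg_mats" and "\<tau> > inf_norm C"
  shows "OT C a b \<le> uot_objective C \<tau> a b X + 2 * (inf_norm C)\<^sup>2 / \<tau>"
proof -
  define D where "D = inf_norm C"
  define u where "u = D / \<tau>"
  define E1 where "E1 = (\<Sum>i\<in>UNIV. \<bar>row_sums X i - a i\<bar>)"
  define E2 where "E2 = (\<Sum>j\<in>UNIV. \<bar>col_sums X j - b j\<bar>)"
  have "D \<ge> 0" using C_le_inf_norm by (auto simp: D_def intro: order_trans)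
  then have u: "0 \<le> u" "u \<le> 1" using assms tau_pos by (auto simp: u_def D_def)
  obtain Y where Y: "Y \<in> transport_polytope a b" and "frob C Y \<le> frob C X + D * (E1 + E2)"
    unfolding D_def E1_def E2_def
    by (rule round_to_transport_plan[OF X C_le_inf_norm a_nonneg b_nonneg sum_a_eq_sum_b])
  then have OT: "OT C a b \<le> frob C X + D * E1 + D * E2"
    using OT_le_frob[OF Y] by (simp add: distrib_left add.assoc)
  have scale: "\<tau> * (u * E - u\<^sup>2) = D * E - D\<^sup>2 / \<tau>" for E
    using tau_pos by (simp add: u_def power2_eq_square field_simps)
  have KL_row: "u * E1 - u\<^sup>2 \<le> KL (row_sums X) a"
    unfolding E1_def using KL_ge_l1_linear[OF _ a_pos sum_a u] row_sums_nonneg[OF X] by blast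
  have row: "D * E1 - D\<^sup>2 / \<tau> \<le> \<tau> * KL (row_sums X) a"
    using mult_left_mono[OF KL_row, of \<tau>] tau_pos scale[of E1] by simp
  have KL_col: "u * E2 - u\<^sup>2 \<le> KL (col_sums X) b"
    unfolding E2_def using KL_ge_l1_linear[OF _ b_pos sum_b u] col_sums_nonneg[OF X] by blast
  have col: "D * E2 - D\<^sup>2 / \<tau> \<le> \<tau> * KL (col_sums X) b"
    using mult_left_mono[OF KL_col, of \<tau>] tau_pos scale[of E2] by simp
  from OT row col show ?thesis unfolding uot_objective_def D_def by linarith
qed

lemma OT_minus_UOT_KL_le: "OT C a b - UOT_KL C \<tau> a b \<le> 2 * (inf_norm C)\<^sup>2 / \<tau>"
proof (cases "\<tau> \<le> inf_norm C")
  case True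
  then have "inf_norm C \<le> (inf_norm C)\<^sup>2 / \<tau>"
    using tau_pos by (simp add: power2_eq_square field_simps mult_right_mono)
  moreover have "(inf_norm C)\<^sup>2 / \<tau> \<ge> 0" using tau_pos by simp
  ultimately show ?thesis using OT_le_inf_norm UOT_KL_nonneg by linarith
next
  case False
  have "OT C a b - 2 * (inf_norm C)\<^sup>2 / \<tau> \<le> UOT_KL C \<tau> a b"
    unfolding UOT_KL_eq_Inf_uot_objective
  proof (rule cInf_greatest)
    show "uot_objective C \<tau> a b ` nonneg_mats \<noteq> {}"
      using product_plan_in_transport_polytope by (auto simp: transport_polytope_def)
  next
    fix v assume "v \<in> uot_objective C \<tau> a b ` nonneg_mats"
    with False show "OT C a b - 2 * (inf_norm C)\<^sup>2 / \<tau> \<le> v"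
      using OT_le_uot_objective by fastforce
  qed
  then show ?thesis by simp
qed

end

theorem theorem4:
  fixes C :: "'n::finite \<Rightarrow> 'n \<Rightarrow> real" and a b :: "'n \<Rightarrow> real" and \<tau> :: real
  assumes C_nonneg: "\<forall>i j. C i j \<ge> 0"
    and tau_pos: "\<tau> > 0"
    and a_simp: "a \<in> simplex" and b_simp: "b \<in> simplex"
    and a_pos: "\<forall>i. a i > 0" and b_pos: "\<forall>i. b i > 0"
  defines "M \<equiv> ln 2 * (inf_norm C)\<^sup>2 * (real (card (UNIV :: 'n set)) + 3 * (1 / min (Min (range a)) (Min (range b))))\<^sup>2
                  + 2 * real (card (UNIV :: 'n set)) * (inf_norm C)\<^sup>2"
  shows "0 \<le> OT C a b - UOT_KL C \<tau> a b \<and> OT C a b - UOT_KL C \<tau> a b \<le> M / \<tau>"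
proof -
  interpret ot_setting C a b \<tau> using assms by unfold_locales
  have "real (card (UNIV :: 'n set)) \<ge> 1" using finite_UNIV_card_ge_0[where 'a = 'n] by simp
  then have "2 * (inf_norm C)\<^sup>2 \<le> 2 * real (card (UNIV :: 'n set)) * (inf_norm C)\<^sup>2"
    using mult_right_mono[of 1 _ "(inf_norm C)\<^sup>2"] by simp
  then have "2 * (inf_norm C)\<^sup>2 \<le> M"
    unfolding M_def by (rule add_increasing[rotated]) (intro mult_nonneg_nonneg; simp)
  then have "2 * (inf_norm C)\<^sup>2 / \<tau> \<le> M / \<tau>" using tau_pos by (simp add: divide_right_mono)
  then show ?thesis using UOT_KL_le_OT OT_minus_UOT_KL_le by linarith
qed

end
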